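(* Let $\Gamma=(V_\Gamma,E_\Gamma)$ be a simple triangular grid graph, let $u,v\in V_\Gamma$, and let $\mathcal U_{uv}\subseteq V_\Gamma$ be the set of all nodes that lie on at least one shortest $uv$-path in $\Gamma$. Then $\mathcal U_{uv}$ is geodesically convex in $\Gamma$: for all $x,y\in\mathcal U_{uv}$, every shortest $xy$-path in $\Gamma$ consists entirely of nodes of $\mathcal U_{uv}$.
   Context: $G_\Delta=(V_\Delta,E_\Delta)$ is the infinite regular triangular grid graph. A triangular grid graph is the subgraph $\Gamma$ of $G_\Delta$ induced by a finite node set $V_\Gamma\subseteq V_\Delta$ such that $\Gamma$ is connected. The holes of $\Gamma$ are the connected components of the subgraph of $G_\Delta$ induced by $V_\Delta\setminus V_\Gamma$; exactly one is unbounded (the outer hole), the others are inner holes. $\Gamma$ is simple if it has no inner holes. Paths are sequences of nodes with consecutive nodes adjacent in $\Gamma$; the length of a path is its number of edges, and $d_\Gamma$ denotes the shortest-path distance in $\Gamma$. *)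

theory Defs
  imports Main
begin

text \<open>Nodes of the infinite regular triangular grid G_Delta in axial coordinates:
  node (a,b) is the point a*e1 + b*e2 with e1 = (1,0), e2 = (1/2, sqrt 3 / 2).\<close>
type_synonym node = "int \<times> int"

definition tri_adj :: "node \<Rightarrow> node \<Rightarrow> bool" where
  "tri_adj p q \<longleftrightarrow> (fst q - fst p, snd q - snd p) \<in> {(1,0), (-1,0), (0,1), (0,-1), (1,-1), (-1,1)}"

definition is_path_in :: "node set \<Rightarrow> node list \<Rightarrow> bool" where
  "is_path_in S ps \<longleftrightarrow> ps \<noteq> [] \<and> set ps \<subseteq> S \<and>
     (\<forall>i. Suc i < length ps \<longrightarrow> tri_adj (ps ! i) (ps ! Suc i))"

definition path_between :: "node set \<Rightarrow> node \<Rightarrow> node \<Rightarrow> node list \<Rightarrow> bool" where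
  "path_between S x y ps \<longleftrightarrow> is_path_in S ps \<and> hd ps = x \<and> last ps = y"

definition path_len :: "node list \<Rightarrow> nat" where
  "path_len ps = length ps - 1"

definition connected_in :: "node set \<Rightarrow> node \<Rightarrow> node \<Rightarrow> bool" where
  "connected_in S x y \<longleftrightarrow> (\<exists>ps. path_between S x y ps)"

definition tri_grid_graph :: "node set \<Rightarrow> bool" where
  "tri_grid_graph V \<longleftrightarrow> finite V \<and> (\<forall>x\<in>V. \<forall>y\<in>V. connected_in V x y)"

definition holes :: "node set \<Rightarrow> node set set" where
  "holes V = {{y. connected_in (- V) x y} | x. x \<notin> V}"

text \<open>Simple: no inner (bounded = finite) holes, i.e. every hole is the unbounded one.\<close>
definition simple_tri_grid_graph :: "node set \<Rightarrow> bool" where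
  "simple_tri_grid_graph V \<longleftrightarrow> tri_grid_graph V \<and> (\<forall>H\<in>holes V. infinite H)"

definition dist_in :: "node set \<Rightarrow> node \<Rightarrow> node \<Rightarrow> nat" where
  "dist_in V x y = (LEAST n. \<exists>ps. path_between V x y ps \<and> path_len ps = n)"

definition shortest_path :: "node set \<Rightarrow> node \<Rightarrow> node \<Rightarrow> node list \<Rightarrow> bool" where
  "shortest_path V x y ps \<longleftrightarrow> path_between V x y ps \<and> path_len ps = dist_in V x y"

definition U_set :: "node set \<Rightarrow> node \<Rightarrow> node \<Rightarrow> node set" where
  "U_set V u v = {w. \<exists>ps. shortest_path V u v ps \<and> w \<in> set ps}"

definition geodesically_convex :: "node set \<Rightarrow> node set \<Rightarrow> bool" where
  "geodesically_convex V U \<longleftrightarrow>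
     (\<forall>x\<in>U. \<forall>y\<in>U. \<forall>ps. shortest_path V x y ps \<longrightarrow> set ps \<subseteq> U)"

end

theory Submission
  imports Defs
begin

(*
  For each of the three edge directions of the grid, the non-horizontal edges between two
  adjacent rows fall into ladders: the edges joining a maximal run of nodes of
  the graph in one row to a maximal run in the next row. Since the graph has no inner holes,
  the winding number of a closed walk of the graph around any point outside it vanishes;
  hence every closed walk crosses each ladder as often upwards as downwards, and the signed
  number of crossings defines an integer potential on the nodes. A shortest path crosses a
  ladder at most once: between two consecutive crossings it could either be shortened
  along a row, or be closed along a row into a closed walk crossing the ladder only once.
  Every edge is non-horizontal for exactly two of the three directions and then lies in
  exactly one ladder, so twice the distance is the l1-distance of the potential vectors.
  In l1 the nodes on shortest uv-paths are those lying coordinatewise between u and v, and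
  this set is geodesically convex because betweenness of integers is transitive.
*)

section \<open>The triangular grid\<close>

lemma tri_adj_iff: "tri_adj p q \<longleftrightarrow>
  (fst q - fst p = 1 \<and> snd q = snd p) \<or> (fst q - fst p = -1 \<and> snd q = snd p) \<or>
  (fst q = fst p \<and> snd q - snd p = 1) \<or> (fst q = fst p \<and> snd q - snd p = -1) \<or>
  (fst q - fst p = 1 \<and> snd q - snd p = -1) \<or> (fst q - fst p = -1 \<and> snd q - snd p = 1)"
  unfolding tri_adj_def by (simp only: insert_iff empty_iff prod.inject) arith

lemma tri_adj_sym: "tri_adj x y \<Longrightarrow> tri_adj y x"
  unfolding tri_adj_iff by (elim disjE conjE) simp_all

lemma tri_adj_cases:
  assumes "tri_adj (a, b) q"
  obtains "q = (a+1, b)" | "q = (a-1, b)" | "q = (a, b+1)" | "q = (a, b-1)"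
    | "q = (a+1, b-1)" | "q = (a-1, b+1)"
proof -
  obtain c d where q: "q = (c, d)" by (cases q)
  show ?thesis
    using assms that unfolding q tri_adj_iff fst_conv snd_conv prod.inject
    by (elim disjE conjE) (simp_all add: algebra_simps)
qed

lemma tri_adj_fst: "tri_adj x y \<Longrightarrow> \<bar>fst y - fst x\<bar> \<le> 1"
  unfolding tri_adj_iff by (elim disjE conjE) simp_all

lemma tri_adj_snd: "tri_adj x y \<Longrightarrow> snd y = snd x + 1 \<or> snd x = snd y + 1 \<or> snd x = snd y"
  unfolding tri_adj_iff by (elim disjE conjE) simp_all

lemma tri_adj_up: "tri_adj x y \<Longrightarrow> snd y = snd x + 1 \<Longrightarrow> fst x - 1 \<le> fst y \<and> fst y \<le> fst x"
  unfolding tri_adj_iff by (elim disjE conjE) simp_all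

lemma tri_adj_fst_step_diff:
  assumes "tri_adj p q" "tri_adj s r" "snd q - snd p = snd r - snd s" "snd q \<noteq> snd p"
  shows "\<bar>(fst q - fst p) - (fst r - fst s)\<bar> \<le> 1"
  using assms unfolding tri_adj_iff by (elim disjE conjE) simp_all

section \<open>Paths, geodesics and geodesic intervals\<close>

lemma is_path_in_iff: "is_path_in S ps \<longleftrightarrow> ps \<noteq> [] \<and> set ps \<subseteq> S \<and> successively tri_adj ps"
  unfolding is_path_in_def successively_conv_nth by blast

lemma is_path_in_rev: "is_path_in S ps \<Longrightarrow> is_path_in S (rev ps)"
  by (auto simp: is_path_in_iff tri_adj_sym elim: successively_mono)

lemma path_fst_bound:
  "successively tri_adj ps \<Longrightarrow> ps \<noteq> [] \<Longrightarrow> \<bar>fst (last ps) - fst (hd ps)\<bar> \<le> int (length ps) - 1"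
proof (induction ps rule: induct_list012)
  case (3 x y zs)
  then show ?case using tri_adj_fst[of x y] by simp
qed auto

lemma is_path_in_map:
  assumes "inj f" "\<And>x y. tri_adj (f x) (f y) \<longleftrightarrow> tri_adj x y"
  shows "is_path_in (f ` S) (map f ps) \<longleftrightarrow> is_path_in S ps"
  using assms(1) by (simp add: is_path_in_iff successively_map assms inj_image_subset_iff)

lemma is_path_in_join:
  assumes "is_path_in S xs" "is_path_in S ys" "hd ys = last xs"
  shows "is_path_in S (xs @ tl ys)" "hd (xs @ tl ys) = hd xs" "last (xs @ tl ys) = last ys"
    "path_len (xs @ tl ys) = path_len xs + path_len ys"
proof -
  obtain y ys' where ys: "ys = y # ys'" using assms(2) by (cases ys) (auto simp: is_path_in_iff)
  have "xs \<noteq> []" using assms(1) by (simp add: is_path_in_iff)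
  then show "is_path_in S (xs @ tl ys)" "hd (xs @ tl ys) = hd xs" "last (xs @ tl ys) = last ys"
    using assms unfolding ys by (auto simp: is_path_in_iff successively_append_iff successively_Cons)
  show "path_len (xs @ tl ys) = path_len xs + path_len ys"
    using \<open>xs \<noteq> []\<close> unfolding ys path_len_def by (cases xs) auto
qed

lemma path_between_join:
  assumes "path_between S x w xs" "path_between S w y ys"
  shows "path_between S x y (xs @ tl ys)" "path_len (xs @ tl ys) = path_len xs + path_len ys"
  using is_path_in_join[of S xs ys] assms by (auto simp: path_between_def)

definition geodesic :: "node set \<Rightarrow> node list \<Rightarrow> bool" where
  "geodesic S ps \<longleftrightarrow> is_path_in S ps \<and>
     (\<forall>qs. is_path_in S qs \<and> hd qs = hd ps \<and> last qs = last ps \<longrightarrow> length ps \<le> length qs)"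

lemma geodesic_length_le:
  "geodesic S ps \<Longrightarrow> is_path_in S qs \<Longrightarrow> hd qs = hd ps \<Longrightarrow> last qs = last ps \<Longrightarrow>
    length ps \<le> length qs"
  unfolding geodesic_def by blast

lemma geodesic_infix:
  assumes "geodesic S (xs @ ys @ zs)" "ys \<noteq> []"
  shows "geodesic S ys"
proof -
  have path: "is_path_in S (xs @ ys @ zs)" using assms(1) by (simp add: geodesic_def)
  then have "is_path_in S ys" using assms(2)
    by (auto simp: is_path_in_iff successively_append_iff)
  moreover have "length ys \<le> length qs"
    if qs: "is_path_in S qs" "hd qs = hd ys" "last qs = last ys" for qs
  proof -
    have "qs \<noteq> []" using qs(1) by (simp add: is_path_in_iff)
    then have "is_path_in S (xs @ qs @ zs)" using path qs assms(2)
      by (auto simp: is_path_in_iff successively_append_iff)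
    moreover have "hd (xs @ qs @ zs) = hd (xs @ ys @ zs)" "last (xs @ qs @ zs) = last (xs @ ys @ zs)"
      using qs \<open>qs \<noteq> []\<close> assms(2) by (auto simp: hd_append last_append)
    ultimately show ?thesis using assms(1) unfolding geodesic_def by fastforce
  qed
  ultimately show ?thesis by (simp add: geodesic_def)
qed

lemma geodesic_map:
  assumes "bij f" "\<And>x y. tri_adj (f x) (f y) \<longleftrightarrow> tri_adj x y" "geodesic S ps"
  shows "geodesic (f ` S) (map f ps)"
proof -
  have inj: "inj f" and f_inv: "\<And>z. f (inv f z) = z"
    using assms(1) by (auto simp: bij_is_inj bij_is_surj surj_f_inv_f)
  have path: "is_path_in S ps" using assms(3) by (simp add: geodesic_def)
  have "length ps \<le> length qs"
    if qs: "is_path_in (f ` S) qs" "hd qs = hd (map f ps)" "last qs = last (map f ps)" for qs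
  proof -
    have qs_eq: "qs = map f (map (inv f) qs)" by (simp add: f_inv map_idI)
    have "is_path_in S (map (inv f) qs)"
      using qs(1) is_path_in_map[OF inj assms(2)] qs_eq by metis
    moreover have "qs \<noteq> []" "ps \<noteq> []" using qs(1) path by (auto simp: is_path_in_iff)
    then have "hd (map (inv f) qs) = hd ps" "last (map (inv f) qs) = last ps"
      using qs(2,3) inj by (auto simp: hd_map last_map)
    ultimately show ?thesis using assms(3) unfolding geodesic_def by fastforce
  qed
  then show ?thesis using path is_path_in_map[OF inj assms(2)] by (simp add: geodesic_def)
qed

lemma dist_in_le: "path_between S x y ps \<Longrightarrow> dist_in S x y \<le> path_len ps"
  unfolding dist_in_def by (rule Least_le) blast

lemma shortest_path_exists:
  assumes "connected_in S x y"
  obtains ps where "shortest_path S x y ps"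
proof -
  have "\<exists>n ps. path_between S x y ps \<and> path_len ps = n"
    using assms by (auto simp: connected_in_def)
  then have "\<exists>ps. path_between S x y ps \<and> path_len ps = dist_in S x y"
    unfolding dist_in_def by (rule LeastI_ex)
  then show ?thesis using that by (auto simp: shortest_path_def)
qed

lemma shortest_path_geodesic:
  assumes "shortest_path S x y ps"
  shows "geodesic S ps"
proof -
  have ps: "path_between S x y ps" "path_len ps = dist_in S x y"
    using assms by (auto simp: shortest_path_def)
  have "length ps \<le> length qs"
    if "is_path_in S qs" "hd qs = hd ps" "last qs = last ps" for qs
  proof -
    have "path_between S x y qs" using that ps(1) by (auto simp: path_between_def)
    then have "path_len ps \<le> path_len qs" using dist_in_le ps(2) by simp
    moreover have "qs \<noteq> []" "ps \<noteq> []"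
      using that ps(1) by (auto simp: is_path_in_iff path_between_def)
    ultimately show ?thesis by (cases ps; cases qs) (auto simp: path_len_def)
  qed
  then show ?thesis using ps(1) by (auto simp: geodesic_def path_between_def)
qed

lemma dist_in_split:
  assumes "path_between S x y ps" "w \<in> set ps"
  shows "dist_in S x w + dist_in S w y \<le> path_len ps"
proof -
  obtain i where i: "i < length ps" "ps ! i = w" using assms(2) by (auto simp: in_set_conv_nth)
  have "successively tri_adj (take (Suc i) ps @ drop (Suc i) ps)"
    "successively tri_adj (take i ps @ drop i ps)"
    using assms(1) by (simp_all add: path_between_def is_path_in_iff)
  then have path: "successively tri_adj (take (Suc i) ps)" "successively tri_adj (drop i ps)"
    by (simp_all only: successively_append_iff)
  have "ps \<noteq> []" using i by auto
  then have "hd (take (Suc i) ps) = x" "hd (drop i ps) = w" "last (drop i ps) = y"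
    using i assms(1) by (simp_all add: path_between_def hd_drop_conv_nth)
  moreover have "last (take (Suc i) ps) = w" using i by (simp add: take_Suc_conv_app_nth)
  ultimately have "path_between S x w (take (Suc i) ps)" "path_between S w y (drop i ps)"
    using path i assms(1) by (auto simp: path_between_def is_path_in_iff
        dest: in_set_takeD in_set_dropD)
  moreover have "path_len (take (Suc i) ps) + path_len (drop i ps) = path_len ps"
    using i by (simp add: path_len_def)
  ultimately show ?thesis using dist_in_le by (metis add_le_mono)
qed

lemma dist_in_triangle:
  assumes "connected_in S x w" "connected_in S w y"
  shows "dist_in S x y \<le> dist_in S x w + dist_in S w y"
proof -
  obtain xs ys where "shortest_path S x w xs" "shortest_path S w y ys"
    using assms by (meson shortest_path_exists)
  then show ?thesis
    using path_between_join dist_in_le by (metis shortest_path_def)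
qed

definition geodesic_interval :: "node set \<Rightarrow> node \<Rightarrow> node \<Rightarrow> node set" where
  "geodesic_interval S u v = {w \<in> S. dist_in S u w + dist_in S w v = dist_in S u v}"

lemma U_set_eq_geodesic_interval:
  assumes "\<forall>x\<in>S. \<forall>y\<in>S. connected_in S x y" "u \<in> S" "v \<in> S"
  shows "U_set S u v = geodesic_interval S u v"
proof
  show "U_set S u v \<subseteq> geodesic_interval S u v"
  proof
    fix w assume "w \<in> U_set S u v"
    then obtain ps where ps: "shortest_path S u v ps" "w \<in> set ps" by (auto simp: U_set_def)
    then have "w \<in> S" by (auto simp: shortest_path_def path_between_def is_path_in_def)
    then show "w \<in> geodesic_interval S u v"
      using ps dist_in_split[of S u v ps w] dist_in_triangle[of S u w v] assms
      by (force simp: shortest_path_def geodesic_interval_def)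
  qed
next
  show "geodesic_interval S u v \<subseteq> U_set S u v"
  proof
    fix w assume w: "w \<in> geodesic_interval S u v"
    then have "w \<in> S" by (simp add: geodesic_interval_def)
    then obtain xs ys where xs: "shortest_path S u w xs" and ys: "shortest_path S w v ys"
      using assms by (meson shortest_path_exists)
    then have "shortest_path S u v (xs @ tl ys)"
      using path_between_join[of S u w xs v ys] w
      by (simp add: shortest_path_def geodesic_interval_def)
    moreover have "w \<in> set (xs @ tl ys)"
      using xs by (auto simp: shortest_path_def path_between_def is_path_in_iff)
    ultimately show "w \<in> U_set S u v" by (auto simp: U_set_def)
  qed
qed

section \<open>Geodesic intervals of scaled l1-embeddings\<close>

lemma abs_diff_add_eq_iff_between:
  fixes a b c :: int
  shows "\<bar>b - a\<bar> + \<bar>c - b\<bar> = \<bar>c - a\<bar> \<longleftrightarrow> min a c \<le> b \<and> b \<le> max a c"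
  by (auto simp: abs_if min_def max_def)

lemma sum_abs_diff_add_le_imp_between:
  fixes f g h :: "'k \<Rightarrow> int"
  assumes "finite K" "k \<in> K"
    and "(\<Sum>k\<in>K. \<bar>g k - f k\<bar>) + (\<Sum>k\<in>K. \<bar>h k - g k\<bar>) \<le> (\<Sum>k\<in>K. \<bar>h k - f k\<bar>)"
  shows "min (f k) (h k) \<le> g k \<and> g k \<le> max (f k) (h k)"
proof -
  define excess where "excess k = \<bar>g k - f k\<bar> + \<bar>h k - g k\<bar> - \<bar>h k - f k\<bar>" for k
  have nonneg: "\<forall>k\<in>K. excess k \<ge> 0" by (simp add: excess_def abs_triangle_ineq4 abs_if)
  have "sum excess K \<le> 0" using assms(3) by (simp add: excess_def sum.distrib sum_subtractf)
  moreover have "sum excess K \<ge> 0" using nonneg by (simp add: sum_nonneg)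
  ultimately have "sum excess K = 0" by linarith
  then have "excess k = 0" using sum_nonneg_eq_0_iff[OF assms(1)] nonneg assms(2) by blast
  then show ?thesis by (simp add: excess_def flip: abs_diff_add_eq_iff_between)
qed

definition scaled_l1_embedding :: "node set \<Rightarrow> int \<Rightarrow> 'k set \<Rightarrow> ('k \<Rightarrow> node \<Rightarrow> int) \<Rightarrow> bool" where
  "scaled_l1_embedding S c K \<phi> \<longleftrightarrow> finite K \<and> c > 0 \<and>
     (\<forall>x\<in>S. \<forall>y\<in>S. c * int (dist_in S x y) = (\<Sum>k\<in>K. \<bar>\<phi> k y - \<phi> k x\<bar>))"

lemma scaled_l1_embedding_between:
  assumes "scaled_l1_embedding S c K \<phi>" "x \<in> S" "w \<in> S" "y \<in> S" "k \<in> K"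
    and "dist_in S x w + dist_in S w y \<le> dist_in S x y"
  shows "min (\<phi> k x) (\<phi> k y) \<le> \<phi> k w \<and> \<phi> k w \<le> max (\<phi> k x) (\<phi> k y)"
proof (rule sum_abs_diff_add_le_imp_between[where K = K])
  have "c * int (dist_in S x w) + c * int (dist_in S w y) \<le> c * int (dist_in S x y)"
    using assms(1,6) by (simp add: scaled_l1_embedding_def flip: distrib_left)
  then show "(\<Sum>k\<in>K. \<bar>\<phi> k w - \<phi> k x\<bar>) + (\<Sum>k\<in>K. \<bar>\<phi> k y - \<phi> k w\<bar>) \<le> (\<Sum>k\<in>K. \<bar>\<phi> k y - \<phi> k x\<bar>)"
    using assms(1-4) by (simp add: scaled_l1_embedding_def)
qed (use assms(1,5) in \<open>simp_all add: scaled_l1_embedding_def\<close>)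

lemma scaled_l1_embedding_in_geodesic_interval:
  assumes "scaled_l1_embedding S c K \<phi>" "u \<in> S" "v \<in> S" "w \<in> S"
    and "\<forall>k\<in>K. min (\<phi> k u) (\<phi> k v) \<le> \<phi> k w \<and> \<phi> k w \<le> max (\<phi> k u) (\<phi> k v)"
  shows "w \<in> geodesic_interval S u v"
proof -
  have "(\<Sum>k\<in>K. \<bar>\<phi> k w - \<phi> k u\<bar>) + (\<Sum>k\<in>K. \<bar>\<phi> k v - \<phi> k w\<bar>) = (\<Sum>k\<in>K. \<bar>\<phi> k v - \<phi> k u\<bar>)"
    unfolding sum.distrib[symmetric] using assms(5)
    by (intro sum.cong) (simp_all add: abs_diff_add_eq_iff_between)
  then have "c * int (dist_in S u w + dist_in S w v) = c * int (dist_in S u v)"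
    using assms(1-4) by (simp add: scaled_l1_embedding_def distrib_left)
  then show ?thesis using assms(1,4) by (simp add: scaled_l1_embedding_def geodesic_interval_def)
qed

lemma geodesically_convex_geodesic_interval:
  assumes "scaled_l1_embedding S c K \<phi>" "u \<in> S" "v \<in> S"
  shows "geodesically_convex S (geodesic_interval S u v)"
  unfolding geodesically_convex_def
proof (intro ballI allI impI subsetI)
  fix x y ps w
  assume x: "x \<in> geodesic_interval S u v" and y: "y \<in> geodesic_interval S u v"
    and ps: "shortest_path S x y ps" and w: "w \<in> set ps"
  have S: "x \<in> S" "y \<in> S" "w \<in> S"
    using x y ps w by (auto simp: geodesic_interval_def shortest_path_def path_between_def
        is_path_in_def)
  let ?between = "\<lambda>x w y k. min (\<phi> k x) (\<phi> k y) \<le> \<phi> k w \<and> \<phi> k w \<le> max (\<phi> k x) (\<phi> k y)"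
  have "?between u w v k" if "k \<in> K" for k
  proof -
    have "?between x w y k"
      using scaled_l1_embedding_between[OF assms(1) S(1,3,2) that] dist_in_split[of S x y ps w] ps w
      by (simp add: shortest_path_def)
    moreover have "?between u x v k" "?between u y v k"
      using scaled_l1_embedding_between[OF assms(1,2) S(1) assms(3) that]
        scaled_l1_embedding_between[OF assms(1,2) S(2) assms(3) that] x y
      by (simp_all add: geodesic_interval_def)
    ultimately show ?thesis by (meson min.bounded_iff max.bounded_iff order_trans)
  qed
  then show "w \<in> geodesic_interval S u v"
    using scaled_l1_embedding_in_geodesic_interval[OF assms S(3)] by blast
qed

section \<open>Sums along walks\<close>

fun walk_sum :: "('a \<Rightarrow> 'a \<Rightarrow> int) \<Rightarrow> 'a list \<Rightarrow> int" where
  "walk_sum g (x # y # zs) = g x y + walk_sum g (y # zs)"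
| "walk_sum g _ = 0"

lemma walk_sum_Cons: "walk_sum g (x # xs) = (if xs = [] then 0 else g x (hd xs)) + walk_sum g xs"
  by (cases xs) auto

lemma walk_sum_append:
  "walk_sum g (xs @ ys) =
     walk_sum g xs + walk_sum g ys + (if xs = [] \<or> ys = [] then 0 else g (last xs) (hd ys))"
  by (induction xs rule: induct_list012) (auto simp: walk_sum_Cons)

lemma walk_sum_join:
  assumes "xs \<noteq> []" "ys \<noteq> []" "hd ys = last xs"
  shows "walk_sum g (xs @ tl ys) = walk_sum g xs + walk_sum g ys"
  using assms by (cases ys) (auto simp: walk_sum_append walk_sum_Cons)

lemma walk_sum_rev:
  assumes "\<And>x y. g y x = - g x y"
  shows "walk_sum g (rev xs) = - walk_sum g xs"
proof (induction xs rule: induct_list012)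
  case (3 x y zs)
  have "walk_sum g (rev (x # y # zs)) = walk_sum g (rev (y # zs)) + g y x"
    by (simp add: walk_sum_append)
  then show ?case using "3.IH"(2) assms[of x y] by simp
qed simp_all

lemma walk_sum_map: "walk_sum g (map f xs) = walk_sum (\<lambda>x y. g (f x) (f y)) xs"
  by (induction xs rule: induct_list012) auto

lemma walk_sum_diff: "walk_sum (\<lambda>x y. g x y - h x y) xs = walk_sum g xs - walk_sum h xs"
  by (induction xs rule: induct_list012) auto

lemma walk_sum_sum: "walk_sum (\<lambda>x y. \<Sum>k\<in>K. g k x y) xs = (\<Sum>k\<in>K. walk_sum (g k) xs)"
  by (induction xs rule: induct_list012) (auto simp: sum.distrib)

lemma walk_sum_cong:
  assumes "successively P xs" "\<And>x y. x \<in> set xs \<Longrightarrow> y \<in> set xs \<Longrightarrow> P x y \<Longrightarrow> g x y = h x y"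
  shows "walk_sum g xs = walk_sum h xs"
  using assms by (induction xs rule: induct_list012) auto

lemma walk_sum_telescope: "xs \<noteq> [] \<Longrightarrow> walk_sum (\<lambda>x y. f y - f x) xs = f (last xs) - f (hd xs)"
  by (induction xs rule: induct_list012) auto

lemma walk_sum_const: "xs \<noteq> [] \<Longrightarrow> walk_sum (\<lambda>x y. c) xs = c * (int (length xs) - 1)"
  by (induction xs rule: induct_list012) (auto simp: algebra_simps)

lemma walk_sum_nonneg: "(\<And>x y. g x y \<ge> 0) \<Longrightarrow> walk_sum g xs \<ge> 0"
  by (induction xs rule: induct_list012) auto

lemma walk_sum_eq_0: "(\<And>x y. x \<in> set xs \<Longrightarrow> y \<in> set xs \<Longrightarrow> g x y = 0) \<Longrightarrow> walk_sum g xs = 0"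
  by (induction xs rule: induct_list012) auto

lemma walk_sum_closed_gradient:
  assumes "xs \<noteq> []" "hd xs = last xs" "successively P xs"
    and "\<And>x y. x \<in> set xs \<Longrightarrow> y \<in> set xs \<Longrightarrow> P x y \<Longrightarrow> g x y = f y - f x"
  shows "walk_sum g xs = 0"
  using walk_sum_cong[OF assms(3,4)] walk_sum_telescope[OF assms(1)] assms(2) by simp

lemma walk_sum_abs_eq_0: "walk_sum (\<lambda>x y. \<bar>g x y\<bar>) xs = 0 \<Longrightarrow> walk_sum g xs = 0"
proof (induction xs rule: induct_list012)
  case (3 x y zs)
  have "walk_sum (\<lambda>x y. \<bar>g x y\<bar>) (y # zs) \<ge> 0" by (rule walk_sum_nonneg) simp
  then show ?case using "3.IH"(2) "3.prems" by simp
qed auto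

lemma abs_walk_sum_eq:
  assumes "walk_sum (\<lambda>x y. \<bar>g x y\<bar>) xs \<le> 1"
  shows "\<bar>walk_sum g xs\<bar> = walk_sum (\<lambda>x y. \<bar>g x y\<bar>) xs"
  using assms
proof (induction xs rule: induct_list012)
  case (3 x y zs)
  have "walk_sum (\<lambda>x y. \<bar>g x y\<bar>) (y # zs) \<ge> 0" by (rule walk_sum_nonneg) simp
  then show ?case
    using "3.IH"(2) "3.prems" walk_sum_abs_eq_0[of g "y # zs"] by (cases "g x y = 0") auto
qed auto

lemma walk_sum_first_nonzero_edge:
  assumes "walk_sum (\<lambda>x y. \<bar>g x y\<bar>) xs \<noteq> 0"
  obtains seg s post where "xs = seg @ s # post" "seg \<noteq> []" "g (last seg) s \<noteq> 0"
    "walk_sum (\<lambda>x y. \<bar>g x y\<bar>) seg = 0"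
  using assms
proof (induction xs arbitrary: thesis rule: induct_list012)
  case (3 x y zs)
  show ?case
  proof (cases "g x y = 0")
    case False
    then show ?thesis using "3.prems"(1)[of "[x]" y zs] by simp
  next
    case True
    obtain seg s post where "y # zs = seg @ s # post" "seg \<noteq> []" "g (last seg) s \<noteq> 0"
      "walk_sum (\<lambda>x y. \<bar>g x y\<bar>) seg = 0"
      using "3.IH"(2) "3.prems"(2) True by auto
    moreover from this have "hd seg = y" by (cases seg) auto
    ultimately show ?thesis
      using "3.prems"(1)[of "x # seg" s post] True by (simp add: walk_sum_Cons)
  qed
qed auto

lemma walk_sum_consecutive_nonzero_edges:
  assumes "walk_sum (\<lambda>x y. \<bar>g x y\<bar>) xs \<ge> 2" "\<And>x y. \<bar>g x y\<bar> \<le> 1"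
  obtains pre p seg s post where "xs = pre @ p # seg @ s # post" "seg \<noteq> []"
    "g p (hd seg) \<noteq> 0" "g (last seg) s \<noteq> 0" "walk_sum (\<lambda>x y. \<bar>g x y\<bar>) seg = 0"
  using assms(1)
proof (induction xs arbitrary: thesis rule: induct_list012)
  case (3 x y zs)
  show ?case
  proof (cases "g x y = 0")
    case False
    have "\<bar>g x y\<bar> + walk_sum (\<lambda>x y. \<bar>g x y\<bar>) (y # zs) \<ge> 2" "\<bar>g x y\<bar> \<le> 1"
      using "3.prems"(2) assms(2) by simp_all
    then have "walk_sum (\<lambda>x y. \<bar>g x y\<bar>) (y # zs) \<noteq> 0" by linarith
    then obtain seg s post where "y # zs = seg @ s # post" "seg \<noteq> []" "g (last seg) s \<noteq> 0"
      "walk_sum (\<lambda>x y. \<bar>g x y\<bar>) seg = 0"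
      by (rule walk_sum_first_nonzero_edge)
    moreover from this have "hd seg = y" by (cases seg) auto
    ultimately show ?thesis using "3.prems"(1)[of "[]" x seg s post] False by simp
  next
    case True
    then have "walk_sum (\<lambda>x y. \<bar>g x y\<bar>) (y # zs) \<ge> 2" using "3.prems"(2) by simp
    then obtain pre p seg s post where "y # zs = pre @ p # seg @ s # post" "seg \<noteq> []"
      "g p (hd seg) \<noteq> 0" "g (last seg) s \<noteq> 0" "walk_sum (\<lambda>x y. \<bar>g x y\<bar>) seg = 0"
      using "3.IH"(2) by blast
    then show ?thesis using "3.prems"(1)[of "x # pre" p seg s post] by simp
  qed
qed auto

section \<open>Winding numbers\<close>

definition closed_walk :: "node list \<Rightarrow> bool" where
  "closed_walk g \<longleftrightarrow> g \<noteq> [] \<and> successively tri_adj g \<and> hd g = last g"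

text \<open>\<open>crossing b t\<close> counts an edge with signs if it crosses the horizontal ray that starts
  at the centroid of the triangle (t - 1, b), (t, b), (t - 1, b + 1) and points in direction (1, 0);
  thus \<open>winding g p\<close> is the winding number of g around the centroid of the triangle
  p, p + (1, 0), p + (0, 1).\<close>

definition crossing :: "int \<Rightarrow> int \<Rightarrow> node \<Rightarrow> node \<Rightarrow> int" where
  "crossing b t x y =
     (if snd x = b \<and> snd y = b + 1 \<and> fst x \<ge> t then 1 else 0) -
     (if snd y = b \<and> snd x = b + 1 \<and> fst y \<ge> t then 1 else 0)"

definition winding :: "node list \<Rightarrow> node \<Rightarrow> int" where
  "winding g p = walk_sum (crossing (snd p) (fst p + 1)) g"

lemma crossing_next_row:
  assumes "closed_walk g" "(t - 1, b + 1) \<notin> set g"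
  shows "walk_sum (crossing (b + 1) t) g = walk_sum (crossing b t) g"
proof -
  let ?f = "\<lambda>z. if snd z = b + 1 \<and> fst z \<ge> t then 1 else 0 :: int"
  have "crossing b t x y - crossing (b + 1) t x y = ?f y - ?f x"
    if "x \<in> set g" "y \<in> set g" "tri_adj x y" for x y
  proof -
    obtain a c where x: "x = (a, c)" by (cases x)
    have "x \<noteq> (t - 1, b + 1)" "y \<noteq> (t - 1, b + 1)" using assms(2) that(1,2) by auto
    then show ?thesis
      using that(3) unfolding x
      by (elim tri_adj_cases) (auto simp: crossing_def)
  qed
  then have "walk_sum (\<lambda>x y. crossing b t x y - crossing (b + 1) t x y) g = 0"
    using assms(1) unfolding closed_walk_def by (intro walk_sum_closed_gradient[of _ tri_adj]) auto
  then show ?thesis by (simp add: walk_sum_diff)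
qed

lemma crossing_next_column:
  assumes "successively tri_adj g" "(t, b) \<notin> set g"
  shows "walk_sum (crossing b t) g = walk_sum (crossing b (t + 1)) g"
proof (rule walk_sum_cong[OF assms(1)])
  fix x y assume "x \<in> set g" "y \<in> set g"
  then have "x \<noteq> (t, b)" "y \<noteq> (t, b)" using assms(2) by auto
  then show "crossing b t x y = crossing b (t + 1) x y" by (auto simp: crossing_def prod_eq_iff)
qed

lemma crossing_right_of_walk:
  assumes "closed_walk g" "\<forall>z\<in>set g. fst z \<ge> t"
  shows "walk_sum (crossing b t) g = 0"
proof (rule walk_sum_closed_gradient[where f = "\<lambda>z. if snd z \<le> b then 0 else 1"])
  fix x y assume "x \<in> set g" "y \<in> set g" "tri_adj x y"
  then show "crossing b t x y = (if snd y \<le> b then 0 else 1) - (if snd x \<le> b then 0 else 1)"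
    using assms(2) unfolding tri_adj_iff crossing_def by (elim disjE conjE) auto
qed (use assms(1) in \<open>auto simp: closed_walk_def\<close>)

lemma crossing_left_of_walk: "\<forall>z\<in>set g. fst z < t \<Longrightarrow> walk_sum (crossing b t) g = 0"
  by (rule walk_sum_eq_0) (auto simp: crossing_def)

lemma crossing_off_walk_row: "\<forall>z\<in>set g. snd z \<noteq> b \<Longrightarrow> walk_sum (crossing b t) g = 0"
  by (rule walk_sum_eq_0) (auto simp: crossing_def)

lemma finite_winding_support:
  assumes "closed_walk g"
  shows "finite {p. winding g p \<noteq> 0}"
proof (rule finite_subset)
  have fin: "finite (fst ` set g)" "fst ` set g \<noteq> {}" using assms by (auto simp: closed_walk_def)
  show "{p. winding g p \<noteq> 0} \<subseteq> {Min (fst ` set g) .. Max (fst ` set g)} \<times> snd ` set g"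
  proof
    fix p assume "p \<in> {p. winding g p \<noteq> 0}"
    then have nz: "winding g p \<noteq> 0" by simp
    obtain a b where p: "p = (a, b)" by (cases p)
    have "\<not> (\<forall>z\<in>set g. snd z \<noteq> b)"
      using crossing_off_walk_row[of g b "a + 1"] nz by (auto simp: winding_def p)
    then have "b \<in> snd ` set g" by force
    moreover obtain z1 where "z1 \<in> set g" "fst z1 \<le> a"
      using crossing_right_of_walk[OF assms, of "a + 1" b] nz by (force simp: winding_def p)
    then have "Min (fst ` set g) \<le> a" using fin by (meson Min_le image_eqI order_trans)
    moreover obtain z2 where "z2 \<in> set g" "fst z2 \<ge> a"
      using crossing_left_of_walk[of g "a + 1" b] nz by (force simp: winding_def p)
    then have "a \<le> Max (fst ` set g)" using fin by (meson Max_ge image_eqI order_trans)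
    ultimately show "p \<in> {Min (fst ` set g) .. Max (fst ` set g)} \<times> snd ` set g" by (simp add: p)
  qed
qed simp

lemma winding_adj:
  assumes "closed_walk g" "tri_adj p q" "p \<notin> set g" "q \<notin> set g"
  shows "winding g q = winding g p"
proof -
  obtain a b where p: "p = (a, b)" by (cases p)
  have g: "successively tri_adj g" using assms(1) by (simp add: closed_walk_def)
  have right: "winding g (a + 1, b) = winding g (a, b)" if "(a + 1, b) \<notin> set g" for a b
    using crossing_next_column[OF g that] by (simp add: winding_def)
  have up: "winding g (a, b + 1) = winding g (a, b)" if "(a, b + 1) \<notin> set g" for a b
    using crossing_next_row[OF assms(1), of "a + 1" b] that by (simp add: winding_def)
  have up_left: "winding g (a - 1, b + 1) = winding g (a, b)"
    if "(a - 1, b + 1) \<notin> set g" "(a, b) \<notin> set g" for a b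
    using crossing_next_row[OF assms(1), of a b] crossing_next_column[OF g that(2)] that(1)
    by (simp add: winding_def)
  show ?thesis
    using assms(2) unfolding p
    by (rule tri_adj_cases)
      (use assms(3,4) right[of a b] right[of "a - 1" b] up[of a b] up[of a "b - 1"]
        up_left[of a b] up_left[of "a + 1" "b - 1"] in \<open>simp_all add: p\<close>)
qed

lemma winding_along_path:
  assumes "closed_walk g" "successively tri_adj ps" "ps \<noteq> []" "set ps \<inter> set g = {}"
  shows "winding g (last ps) = winding g (hd ps)"
  using assms(2-4)
proof (induction ps rule: induct_list012)
  case (3 x y zs)
  then show ?case using winding_adj[OF assms(1), of x y] by auto
qed auto

definition no_inner_holes :: "node set \<Rightarrow> bool" where
  "no_inner_holes W \<longleftrightarrow> (\<forall>H\<in>holes W. infinite H)"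

text \<open>The winding number is constant on the hole containing p, which is infinite, whereas it
  vanishes outside a finite set.\<close>

lemma winding_outside_eq_0:
  assumes "no_inner_holes W" "closed_walk g" "set g \<subseteq> W" "p \<notin> W"
  shows "winding g p = 0"
proof (rule ccontr)
  assume nz: "winding g p \<noteq> 0"
  let ?H = "{y. connected_in (- W) p y}"
  have "?H \<in> holes W" using assms(4) unfolding holes_def by blast
  then have "infinite ?H" using assms(1) by (simp add: no_inner_holes_def)
  moreover have "?H \<subseteq> {q. winding g q \<noteq> 0}"
  proof
    fix q assume "q \<in> ?H"
    then obtain ps where "path_between (- W) p q ps" by (auto simp: connected_in_def)
    then have "winding g q = winding g p"
      using winding_along_path[OF assms(2)] assms(3)
      by (auto simp: path_between_def is_path_in_iff)
    then show "q \<in> {q. winding g q \<noteq> 0}" using nz by simp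
  qed
  ultimately show False using finite_winding_support[OF assms(2)] finite_subset by blast
qed

section \<open>Ladders\<close>

definition maximal_run :: "int set \<Rightarrow> int \<Rightarrow> int \<Rightarrow> bool" where
  "maximal_run S l r \<longleftrightarrow> l \<le> r \<and> {l..r} \<subseteq> S \<and> l - 1 \<notin> S \<and> r + 1 \<notin> S"

lemma maximal_run_exists:
  assumes "finite S" "a \<in> S"
  obtains l r where "maximal_run S l r" "l \<le> a" "a \<le> r"
proof -
  let ?L = "{l. l \<le> a \<and> {l..a} \<subseteq> S}" and ?R = "{r. a \<le> r \<and> {a..r} \<subseteq> S}"
  have "?L \<subseteq> S" "?R \<subseteq> S" by auto
  then have fin: "finite ?L" "finite ?R" using assms(1) finite_subset by auto
  have a: "a \<in> ?L" "a \<in> ?R" using assms(2) by auto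
  define l where "l = Min ?L"
  define r where "r = Max ?R"
  have l: "l \<in> ?L" unfolding l_def by (rule Min_in[OF fin(1)]) (use a in blast)
  have r: "r \<in> ?R" unfolding r_def by (rule Max_in[OF fin(2)]) (use a in blast)
  have "l - 1 \<notin> S"
  proof
    assume "l - 1 \<in> S"
    moreover have "{l - 1..a} \<subseteq> insert (l - 1) {l..a}" by auto
    ultimately have "{l - 1..a} \<subseteq> S" using l by blast
    then have "l - 1 \<in> ?L" using l by simp
    then show False using fin(1) Min_le[of ?L "l - 1"] by (simp add: l_def)
  qed
  moreover have "r + 1 \<notin> S"
  proof
    assume "r + 1 \<in> S"
    moreover have "{a..r + 1} \<subseteq> insert (r + 1) {a..r}" by auto
    ultimately have "{a..r + 1} \<subseteq> S" using r by blast
    then have "r + 1 \<in> ?R" using r by simp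
    then show False using fin(2) Max_ge[of ?R "r + 1"] by (simp add: r_def)
  qed
  moreover have "{l..r} \<subseteq> S" using l r by (auto simp: subset_eq)
  ultimately show ?thesis using that l r by (simp add: maximal_run_def)
qed

lemma maximal_run_unique:
  assumes "maximal_run S l r" "maximal_run S l' r'" "a \<in> {l..r}" "a \<in> {l'..r'}"
  shows "l = l' \<and> r = r'"
proof -
  have "l \<le> l' \<and> r' \<le> r"
    if "maximal_run S l r" "maximal_run S l' r'" "a \<in> {l..r}" "a \<in> {l'..r'}" for l r l' r'
  proof -
    have "\<not> l' < l"
    proof
      assume "l' < l"
      then have "l - 1 \<in> {l'..r'}" using that(3,4) by simp
      then show False using that(1,2) unfolding maximal_run_def by blast
    qed
    moreover have "\<not> r < r'"
    proof
      assume "r < r'"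
      then have "r + 1 \<in> {l'..r'}" using that(3,4) by simp
      then show False using that(1,2) unfolding maximal_run_def by blast
    qed
    ultimately show ?thesis by simp
  qed
  from this[OF assms] this[OF assms(2,1,4,3)] show ?thesis by simp
qed

definition row :: "node set \<Rightarrow> int \<Rightarrow> int set" where
  "row W b = (\<lambda>a. (a, b)) -` W"

lemma mem_row [simp]: "a \<in> row W b \<longleftrightarrow> (a, b) \<in> W"
  by (simp add: row_def)

lemma finite_row: "finite W \<Longrightarrow> finite (row W b)"
  unfolding row_def by (rule finite_vimageI) (auto simp: inj_def)

text \<open>A ladder consists of a maximal run [aL, aR] of row b and a maximal run [cL, cR] of row
  b + 1 that are joined by an edge; the last condition says this, as the upper neighbours of (a, b)
  are (a - 1, b + 1) and (a, b + 1). The edges between the two runs are the rungs of the ladder,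
  and \<open>ladder_flow\<close> counts a rung traversed upwards as +1.\<close>

fun is_ladder :: "node set \<Rightarrow> int \<times> int \<times> int \<times> int \<times> int \<Rightarrow> bool" where
  "is_ladder W (b, aL, aR, cL, cR) \<longleftrightarrow>
     maximal_run (row W b) aL aR \<and> maximal_run (row W (b + 1)) cL cR \<and>
     max aL cL \<le> min aR (cR + 1)"

fun ladder_flow :: "int \<times> int \<times> int \<times> int \<times> int \<Rightarrow> node \<Rightarrow> node \<Rightarrow> int" where
  "ladder_flow (b, aL, aR, cL, cR) x y =
     (if snd x = b \<and> aL \<le> fst x \<and> fst x \<le> aR \<and> snd y = b + 1 \<and> cL \<le> fst y \<and> fst y \<le> cR
      then 1 else 0) -
     (if snd y = b \<and> aL \<le> fst y \<and> fst y \<le> aR \<and> snd x = b + 1 \<and> cL \<le> fst x \<and> fst x \<le> cR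
      then 1 else 0)"

lemma ladder_flow_antisym: "ladder_flow l y x = - ladder_flow l x y"
  by (cases l) simp

lemma ladder_flow_bound: "\<bar>ladder_flow l x y\<bar> \<le> 1"
  by (cases l) simp

lemma ladder_flow_same_row: "snd x = snd y \<Longrightarrow> ladder_flow l x y = 0"
  by (cases l) simp

lemma ladder_flow_eq_crossing_diff:
  assumes "is_ladder W (b, aL, aR, cL, cR)" "x \<in> W" "y \<in> W" "tri_adj x y"
  shows "ladder_flow (b, aL, aR, cL, cR) x y =
    crossing b (max aL cL) x y - crossing b (min aR (cR + 1) + 1) x y"
proof -
  obtain a c where x: "x = (a, c)" by (cases x)
  have "cL - 1 \<notin> row W (b + 1)" "cR + 1 \<notin> row W (b + 1)" "max aL cL \<le> min aR (cR + 1)"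
    "aL \<le> aR" "cL \<le> cR"
    using assms(1) by (auto simp: maximal_run_def)
  then have "snd y = b + 1 \<longrightarrow> fst y \<noteq> cL - 1 \<and> fst y \<noteq> cR + 1"
    "snd x = b + 1 \<longrightarrow> fst x \<noteq> cL - 1 \<and> fst x \<noteq> cR + 1"
    using assms(2,3) by (metis mem_row prod.collapse)+
  then show ?thesis
    using assms(4) \<open>max aL cL \<le> min aR (cR + 1)\<close> \<open>aL \<le> aR\<close> \<open>cL \<le> cR\<close> unfolding x
    by (elim tri_adj_cases) (auto simp: crossing_def)
qed

text \<open>On the edges of W the ladder flow is the difference of the crossings of two rays whose
  base triangles have a corner outside W, so both winding numbers vanish.\<close>

lemma ladder_flow_closed_walk:
  assumes "no_inner_holes W" "closed_walk g" "set g \<subseteq> W" "is_ladder W l"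
  shows "walk_sum (ladder_flow l) g = 0"
proof -
  obtain b aL aR cL cR where l: "l = (b, aL, aR, cL, cR)" by (cases l)
  have runs: "aL - 1 \<notin> row W b" "aR + 1 \<notin> row W b" "cL - 1 \<notin> row W (b + 1)" "cR + 1 \<notin> row W (b + 1)"
    using assms(4) by (auto simp: l maximal_run_def)
  then have outside: "(aL - 1, b) \<notin> set g" "(aR + 1, b) \<notin> set g"
    "(cL - 1, b + 1) \<notin> set g" "(cR + 1, b + 1) \<notin> set g"
    using assms(3) by auto
  have g: "successively tri_adj g" using assms(2) by (simp add: closed_walk_def)
  have winding_0: "winding g (aL - 1, b) = 0" "winding g (aR + 1, b) = 0"
    "winding g (cL - 1, b + 1) = 0" "winding g (cR + 1, b + 1) = 0"
    using winding_outside_eq_0[OF assms(1-3)] runs by auto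
  have "(cR + 1 + 1 - 1, b + 1) \<notin> set g" using outside(4) by (metis add_diff_cancel_right')
  then have "walk_sum (crossing b aL) g = winding g (aL - 1, b)"
    "walk_sum (crossing b cL) g = winding g (cL - 1, b + 1)"
    "walk_sum (crossing b (aR + 1)) g = winding g (aR + 1, b)"
    "walk_sum (crossing b (cR + 1 + 1)) g = winding g (cR + 1, b + 1)"
    using crossing_next_row[OF assms(2) outside(3)] crossing_next_column[OF g outside(2)]
      crossing_next_row[OF assms(2)]
    by (simp_all add: winding_def)
  then have ends: "walk_sum (crossing b (max aL cL)) g = 0"
    "walk_sum (crossing b (min aR (cR + 1) + 1)) g = 0"
    using winding_0 by (simp_all add: max_def min_def)
  have "walk_sum (ladder_flow l) g =
      walk_sum (\<lambda>x y. crossing b (max aL cL) x y - crossing b (min aR (cR + 1) + 1) x y) g"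
    using assms(3) ladder_flow_eq_crossing_diff[OF assms(4)[unfolded l]]
    by (intro walk_sum_cong[OF g]) (auto simp only: l subset_iff)
  also have "\<dots> = walk_sum (crossing b (max aL cL)) g - walk_sum (crossing b (min aR (cR + 1) + 1)) g"
    by (rule walk_sum_diff)
  finally show ?thesis using ends by simp
qed

lemma row_path_exists:
  assumes "{min a a'..max a a'} \<subseteq> row W c"
  obtains rs where "is_path_in W rs" "hd rs = (a, c)" "last rs = (a', c)"
    "int (length rs) = \<bar>a - a'\<bar> + 1" "\<forall>z\<in>set rs. snd z = c"
proof -
  have row_path: "is_path_in W (map (\<lambda>k. (k, c)) [i..j])"
    "hd (map (\<lambda>k. (k, c)) [i..j]) = (i, c)" "last (map (\<lambda>k. (k, c)) [i..j]) = (j, c)"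
    if "i \<le> j" "{i..j} \<subseteq> row W c" for i j
  proof -
    have "successively (\<lambda>x y. tri_adj (x, c) (y, c)) [i..j]"
      unfolding successively_conv_nth by (auto simp: tri_adj_def)
    then show "is_path_in W (map (\<lambda>k. (k, c)) [i..j])"
      using that by (auto simp: is_path_in_iff successively_map subset_eq)
    have "hd [i..j] = i" "last [i..j] = j"
      using upto_rec1[OF that(1)] upto_rec2[OF that(1)] by (metis list.sel(1), metis last_snoc)
    then show "hd (map (\<lambda>k. (k, c)) [i..j]) = (i, c)" "last (map (\<lambda>k. (k, c)) [i..j]) = (j, c)"
      using that(1) by (simp_all add: hd_map last_map)
  qed
  show ?thesis
  proof (cases "a \<le> a'")
    case True
    then show ?thesis
      using that[of "map (\<lambda>k. (k, c)) [a..a']"] row_path[of a a'] assms by auto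
  next
    case False
    then show ?thesis
      using that[of "rev (map (\<lambda>k. (k, c)) [a'..a])"] row_path[of a' a] assms is_path_in_rev
      by (auto simp: hd_rev last_rev)
  qed
qed

lemma ladder_flow_nonzero:
  assumes "ladder_flow (b, aL, aR, cL, cR) x y \<noteq> 0"
  shows "snd x = b \<and> aL \<le> fst x \<and> fst x \<le> aR \<and> snd y = b + 1 \<and> cL \<le> fst y \<and> fst y \<le> cR \<or>
    snd y = b \<and> aL \<le> fst y \<and> fst y \<le> aR \<and> snd x = b + 1 \<and> cL \<le> fst x \<and> fst x \<le> cR"
  using assms by (auto split: if_splits)

lemma ladder_run_row_path:
  assumes "is_ladder W (b, aL, aR, cL, cR)"
    and "snd x = snd y"
    and "snd x = b \<and> aL \<le> fst x \<and> fst x \<le> aR \<and> aL \<le> fst y \<and> fst y \<le> aR \<or>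
      snd x = b + 1 \<and> cL \<le> fst x \<and> fst x \<le> cR \<and> cL \<le> fst y \<and> fst y \<le> cR"
  obtains rs where "is_path_in W rs" "hd rs = x" "last rs = y"
    "int (length rs) = \<bar>fst x - fst y\<bar> + 1" "\<forall>z\<in>set rs. snd z = snd x"
proof -
  have interval: "{min i j..max i j} \<subseteq> {l..r}" if "l \<le> i" "i \<le> r" "l \<le> j" "j \<le> r"
    for i j l r :: int
    using that by (simp add: min_def max_def)
  have runs: "{aL..aR} \<subseteq> row W b" "{cL..cR} \<subseteq> row W (b + 1)"
    using assms(1) by (simp_all add: maximal_run_def)
  from assms(3) have "{min (fst x) (fst y)..max (fst x) (fst y)} \<subseteq> row W (snd x)"
  proof (elim disjE conjE)
    assume "snd x = b" "aL \<le> fst x" "fst x \<le> aR" "aL \<le> fst y" "fst y \<le> aR"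
    then show ?thesis using subset_trans[OF interval[of aL "fst x" aR "fst y"] runs(1)] by simp
  next
    assume "snd x = b + 1" "cL \<le> fst x" "fst x \<le> cR" "cL \<le> fst y" "fst y \<le> cR"
    then show ?thesis using subset_trans[OF interval[of cL "fst x" cR "fst y"] runs(2)] by simp
  qed
  then obtain rs where "is_path_in W rs" "hd rs = (fst x, snd x)" "last rs = (fst y, snd x)"
    "int (length rs) = \<bar>fst x - fst y\<bar> + 1" "\<forall>z\<in>set rs. snd z = snd x"
    by (rule row_path_exists)
  moreover have "(fst x, snd x) = x" "(fst y, snd x) = y" using assms(2) by (simp_all add: prod_eq_iff)
  ultimately show ?thesis using that by simp
qed

lemma ladder_flow_nonzero_rows:
  "ladder_flow (b, aL, aR, cL, cR) x y \<noteq> 0 \<Longrightarrow> snd x = b \<and> snd y = b + 1 \<or> snd x = b + 1 \<and> snd y = b"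
  by (auto split: if_splits)

lemma rung_endpoints_row_path:
  assumes "is_ladder W l" "ladder_flow l p q \<noteq> 0" "ladder_flow l r s \<noteq> 0"
    and "x \<in> {p, q}" "y \<in> {r, s}" "snd x = snd y"
  shows "\<exists>rs. is_path_in W rs \<and> hd rs = x \<and> last rs = y \<and>
    int (length rs) = \<bar>fst x - fst y\<bar> + 1 \<and> (\<forall>z\<in>set rs. snd z = snd x)"
proof -
  obtain b aL aR cL cR where l: "l = (b, aL, aR, cL, cR)" by (cases l)
  have "snd x = b \<and> aL \<le> fst x \<and> fst x \<le> aR \<and> aL \<le> fst y \<and> fst y \<le> aR \<or>
      snd x = b + 1 \<and> cL \<le> fst x \<and> fst x \<le> cR \<and> cL \<le> fst y \<and> fst y \<le> cR"
    using ladder_flow_nonzero[OF assms(2)[unfolded l]] ladder_flow_nonzero[OF assms(3)[unfolded l]]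
      assms(4-6) by auto
  then obtain rs where "is_path_in W rs" "hd rs = x" "last rs = y"
    "int (length rs) = \<bar>fst x - fst y\<bar> + 1" "\<forall>z\<in>set rs. snd z = snd x"
    by (rule ladder_run_row_path[OF assms(1)[unfolded l] assms(6)])
  then show ?thesis by blast
qed

text \<open>If a geodesic left and re-entered a row across the same ladder, the stretch of the run
  between the two points would be a strictly shorter path.\<close>

lemma geodesic_ladder_recrossing_changes_row:
  assumes "is_ladder W l" "geodesic W (p # seg @ [s])" "seg \<noteq> []"
    and "ladder_flow l p (hd seg) \<noteq> 0" "ladder_flow l (last seg) s \<noteq> 0"
  shows "snd p \<noteq> snd s"
proof
  assume row: "snd p = snd s"
  obtain b aL aR cL cR where l: "l = (b, aL, aR, cL, cR)" by (cases l)
  define q r where "q = hd seg" and "r = last seg"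
  have "is_path_in W (p # seg @ [s])" using assms(2) by (simp add: geodesic_def)
  then have path: "successively tri_adj seg" "tri_adj p q" "tri_adj r s"
    using assms(3)
    by (auto simp: is_path_in_iff successively_Cons successively_append_iff q_def r_def)
  have "\<exists>rw. is_path_in W rw \<and> hd rw = p \<and> last rw = s \<and>
      int (length rw) = \<bar>fst p - fst s\<bar> + 1 \<and> (\<forall>z\<in>set rw. snd z = snd p)"
    by (rule rung_endpoints_row_path[OF assms(1,4,5) insertI1 insertI2[OF singletonI] row])
  then obtain rw where rw: "is_path_in W rw" "hd rw = p" "last rw = s"
    "int (length rw) = \<bar>fst p - fst s\<bar> + 1"
    by blast
  have "length (p # seg @ [s]) \<le> length rw"
    by (rule geodesic_length_le[OF assms(2) rw(1)]) (simp_all add: rw(2,3))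
  then have detour: "int (length seg) + 1 \<le> \<bar>fst p - fst s\<bar>" using rw(4) by simp
  have "\<bar>fst r - fst q\<bar> \<le> int (length seg) - 1"
    unfolding q_def r_def by (rule path_fst_bound[OF path(1) assms(3)])
  moreover have "snd p = b \<and> snd q = b + 1 \<or> snd p = b + 1 \<and> snd q = b"
    "snd r = b \<and> snd s = b + 1 \<or> snd r = b + 1 \<and> snd s = b"
    unfolding q_def r_def by (rule ladder_flow_nonzero_rows[OF assms(4)[unfolded l]],
      rule ladder_flow_nonzero_rows[OF assms(5)[unfolded l]])
  then have "snd q - snd p = snd r - snd s" "snd q \<noteq> snd p" using row by arith+
  then have "\<bar>(fst q - fst p) - (fst r - fst s)\<bar> \<le> 1"
    by (rule tri_adj_fst_step_diff[OF path(2) tri_adj_sym[OF path(3)]])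
  ultimately show False using detour by linarith
qed

text \<open>Otherwise the path between the two rungs, closed up along a run, is a closed walk
  crossing the ladder once in addition to its inner crossings.\<close>

lemma ladder_recrossing_inner_flow:
  assumes "no_inner_holes W" "is_ladder W l" "is_path_in W (p # seg @ [s])" "seg \<noteq> []"
    and "ladder_flow l p (hd seg) \<noteq> 0" "ladder_flow l (last seg) s \<noteq> 0" "snd p \<noteq> snd s"
  shows "walk_sum (ladder_flow l) seg \<noteq> 0"
proof
  assume seg_flow: "walk_sum (ladder_flow l) seg = 0"
  obtain b aL aR cL cR where l: "l = (b, aL, aR, cL, cR)" by (cases l)
  define q r where "q = hd seg" and "r = last seg"
  have path: "is_path_in W seg" "tri_adj p q" "p \<in> W"
    using assms(3,4) by (auto simp: is_path_in_iff successively_Cons successively_append_iff q_def)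
  have "snd p = b \<and> snd q = b + 1 \<or> snd p = b + 1 \<and> snd q = b"
    "snd r = b \<and> snd s = b + 1 \<or> snd r = b + 1 \<and> snd s = b"
    unfolding q_def r_def by (rule ladder_flow_nonzero_rows[OF assms(5)[unfolded l]],
      rule ladder_flow_nonzero_rows[OF assms(6)[unfolded l]])
  then have row: "snd r = snd p" using assms(7) by arith
  have "\<exists>rw. is_path_in W rw \<and> hd rw = r \<and> last rw = p \<and>
      int (length rw) = \<bar>fst r - fst p\<bar> + 1 \<and> (\<forall>z\<in>set rw. snd z = snd r)"
    by (rule rung_endpoints_row_path[OF assms(2) assms(6)[folded r_def] assms(5)[folded q_def]
          insertI1 insertI1 row])
  then obtain rw where rw: "is_path_in W rw" "hd rw = r" "last rw = p" "\<forall>z\<in>set rw. snd z = snd r"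
    by blast
  have return_edge: "is_path_in W (rw @ [q])"
    using rw path by (auto simp: is_path_in_iff successively_append_iff q_def)
  let ?C = "seg @ tl (rw @ [q])"
  have "hd (rw @ [q]) = last seg" using rw(1,2) by (simp add: is_path_in_iff r_def)
  then have C: "is_path_in W ?C" "hd ?C = q" "last ?C = q"
    using is_path_in_join[OF path(1) return_edge] by (simp_all add: q_def)
  then have "closed_walk ?C" by (auto simp: closed_walk_def is_path_in_iff)
  then have "walk_sum (ladder_flow l) ?C = 0"
    using ladder_flow_closed_walk[OF assms(1) _ _ assms(2)] C(1) by (simp add: is_path_in_iff)
  moreover have "walk_sum (ladder_flow l) rw = 0"
    using rw(4) ladder_flow_same_row by (intro walk_sum_eq_0) metis
  moreover have "walk_sum (ladder_flow l) (rw @ [q]) = walk_sum (ladder_flow l) rw + ladder_flow l p q"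
    using rw(1,3) by (simp add: walk_sum_append is_path_in_iff)
  moreover have "walk_sum (ladder_flow l) ?C =
      walk_sum (ladder_flow l) seg + walk_sum (ladder_flow l) (rw @ [q])"
    using path(1) rw(1,2) by (intro walk_sum_join) (auto simp: is_path_in_iff r_def)
  ultimately show False using seg_flow assms(5) by (simp add: q_def)
qed

lemma geodesic_crosses_ladder_at_most_once:
  assumes "no_inner_holes W" "geodesic W ps" "is_ladder W l"
  shows "walk_sum (\<lambda>x y. \<bar>ladder_flow l x y\<bar>) ps \<le> 1"
proof (rule ccontr)
  assume "\<not> ?thesis"
  then have "walk_sum (\<lambda>x y. \<bar>ladder_flow l x y\<bar>) ps \<ge> 2" by simp
  then obtain pre p seg s post where ps: "ps = pre @ p # seg @ s # post" "seg \<noteq> []"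
    and flow: "ladder_flow l p (hd seg) \<noteq> 0" "ladder_flow l (last seg) s \<noteq> 0"
    and inner: "walk_sum (\<lambda>x y. \<bar>ladder_flow l x y\<bar>) seg = 0"
    by (rule walk_sum_consecutive_nonzero_edges) (rule ladder_flow_bound)
  have "geodesic W (p # seg @ [s])" using geodesic_infix[of W pre "p # seg @ [s]" post] assms(2) ps(1) by simp
  then have "snd p \<noteq> snd s" "is_path_in W (p # seg @ [s])"
    using geodesic_ladder_recrossing_changes_row[OF assms(3) _ ps(2) flow] by (auto simp: geodesic_def)
  then have "walk_sum (ladder_flow l) seg \<noteq> 0"
    using ladder_recrossing_inner_flow[OF assms(1,3) _ ps(2) flow] by blast
  then show False using walk_sum_abs_eq_0[OF inner] by simp
qed

lemma finite_ladders:
  assumes "finite W"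
  shows "finite {l. is_ladder W l}"
proof (rule finite_subset)
  show "{l. is_ladder W l} \<subseteq> snd ` W \<times> fst ` W \<times> fst ` W \<times> fst ` W \<times> fst ` W"
  proof
    fix l assume "l \<in> {l. is_ladder W l}"
    moreover obtain b aL aR cL cR where l: "l = (b, aL, aR, cL, cR)" by (cases l)
    ultimately have "(aL, b) \<in> W" "(aR, b) \<in> W" "(cL, b + 1) \<in> W" "(cR, b + 1) \<in> W"
      by (auto simp: maximal_run_def)
    then show "l \<in> snd ` W \<times> fst ` W \<times> fst ` W \<times> fst ` W \<times> fst ` W"
      unfolding l by (force intro: image_eqI)
  qed
qed (use assms in simp)

lemma ladder_flow_sum_upward_edge:
  assumes "finite W" "x \<in> W" "y \<in> W" "tri_adj x y" "snd y = snd x + 1"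
  shows "(\<Sum>l | is_ladder W l. \<bar>ladder_flow l x y\<bar>) = 1"
proof -
  obtain a b where x: "x = (a, b)" by (cases x)
  obtain c where y: "y = (c, b + 1)" using assms(5) x by (cases y) auto
  obtain aL aR where ab: "maximal_run (row W b) aL aR" "aL \<le> a" "a \<le> aR"
    using maximal_run_exists[OF finite_row[OF assms(1)], of a b] assms(2) x by auto
  obtain cL cR where cd: "maximal_run (row W (b + 1)) cL cR" "cL \<le> c" "c \<le> cR"
    using maximal_run_exists[OF finite_row[OF assms(1)], of c "b + 1"] assms(3) y by auto
  have "a - 1 \<le> c" "c \<le> a" using tri_adj_up[OF assms(4,5)] x y by auto
  then have l0: "is_ladder W (b, aL, aR, cL, cR)" using ab cd by (auto simp: maximal_run_def)
  have "ladder_flow l x y = 0" if "is_ladder W l" "l \<noteq> (b, aL, aR, cL, cR)" for l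
  proof (rule ccontr)
    assume nz: "ladder_flow l x y \<noteq> 0"
    obtain b' aL' aR' cL' cR' where l: "l = (b', aL', aR', cL', cR')" by (cases l)
    have "b' = b" "a \<in> {aL'..aR'}" "c \<in> {cL'..cR'}"
      using nz by (auto simp: l x y split: if_splits)
    then have "aL' = aL \<and> aR' = aR" "cL' = cL \<and> cR' = cR"
      using maximal_run_unique[OF ab(1), of aL' aR' a] maximal_run_unique[OF cd(1), of cL' cR' c]
        that(1) ab(2,3) cd(2,3) by (auto simp: l)
    then show False using that(2) \<open>b' = b\<close> by (simp add: l)
  qed
  then have "(\<Sum>l \<in> {l. is_ladder W l} - {(b, aL, aR, cL, cR)}. \<bar>ladder_flow l x y\<bar>) = 0"
    by (intro sum.neutral) auto
  moreover have "(\<Sum>l | is_ladder W l. \<bar>ladder_flow l x y\<bar>) = \<bar>ladder_flow (b, aL, aR, cL, cR) x y\<bar> +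
      (\<Sum>l \<in> {l. is_ladder W l} - {(b, aL, aR, cL, cR)}. \<bar>ladder_flow l x y\<bar>)"
    using l0 by (intro sum.remove[OF finite_ladders[OF assms(1)]]) simp
  ultimately have "(\<Sum>l | is_ladder W l. \<bar>ladder_flow l x y\<bar>) = \<bar>ladder_flow (b, aL, aR, cL, cR) x y\<bar>"
    by (simp only: add_0_right)
  also have "\<dots> = 1" using ab(2,3) cd(2,3) by (simp add: x y)
  finally show ?thesis .
qed

lemma ladder_flow_sum_edge:
  assumes "finite W" "x \<in> W" "y \<in> W" "tri_adj x y"
  shows "(\<Sum>l | is_ladder W l. \<bar>ladder_flow l x y\<bar>) = (if snd x = snd y then 0 else 1)"
proof -
  consider "snd y = snd x + 1" | "snd x = snd y + 1" | "snd x = snd y"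
    using tri_adj_snd[OF assms(4)] by blast
  then show ?thesis
  proof cases
    case 1
    then show ?thesis using ladder_flow_sum_upward_edge[OF assms] by simp
  next
    case 2
    have "(\<Sum>l | is_ladder W l. \<bar>ladder_flow l x y\<bar>) = (\<Sum>l | is_ladder W l. \<bar>ladder_flow l y x\<bar>)"
      by (simp add: ladder_flow_antisym[of _ x y])
    also have "\<dots> = 1"
      using ladder_flow_sum_upward_edge[OF assms(1,3,2) tri_adj_sym[OF assms(4)] 2] .
    finally show ?thesis using 2 by simp
  next
    case 3
    then show ?thesis by (simp add: ladder_flow_same_row)
  qed
qed

section \<open>Rotations of the grid\<close>

definition grid_automorphism :: "(node \<Rightarrow> node) \<Rightarrow> bool" where
  "grid_automorphism f \<longleftrightarrow> bij f \<and> (\<forall>x y. tri_adj (f x) (f y) \<longleftrightarrow> tri_adj x y)"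

text \<open>Rotation by 60 degrees: (1, 0) goes to (0, 1) and (0, 1) to (-1, 1).\<close>

definition rot :: "node \<Rightarrow> node" where
  "rot p = (- snd p, fst p + snd p)"

lemma grid_automorphism_rot: "grid_automorphism rot"
proof -
  have "rot (fst p + snd p, - fst p) = p" for p by (simp add: rot_def)
  then have "surj rot" by (rule surjI)
  moreover have "inj rot" by (auto simp: inj_def rot_def prod_eq_iff)
  moreover have "tri_adj (rot x) (rot y) \<longleftrightarrow> tri_adj x y" for x y
    unfolding tri_adj_iff rot_def fst_conv snd_conv
    by (rule iffI; elim disjE conjE; simp add: algebra_simps)
  ultimately show ?thesis by (simp add: grid_automorphism_def bij_def)
qed

lemma grid_automorphism_tri_adj: "grid_automorphism f \<Longrightarrow> tri_adj (f x) (f y) \<longleftrightarrow> tri_adj x y"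
  unfolding grid_automorphism_def by blast

lemma grid_automorphism_comp:
  "grid_automorphism f \<Longrightarrow> grid_automorphism g \<Longrightarrow> grid_automorphism (f \<circ> g)"
  unfolding grid_automorphism_def by (metis bij_comp comp_apply)

lemma grid_automorphism_funpow:
  assumes "grid_automorphism f"
  shows "grid_automorphism (f ^^ n)"
proof (induction n)
  case 0
  then show ?case by (simp add: grid_automorphism_def bij_id[unfolded id_def])
next
  case (Suc n)
  then show ?case unfolding funpow.simps(2) by (rule grid_automorphism_comp[OF assms])
qed

lemma closed_walk_automorphism:
  "grid_automorphism f \<Longrightarrow> closed_walk g \<Longrightarrow> closed_walk (map f g)"
  by (simp add: closed_walk_def successively_map grid_automorphism_tri_adj hd_map last_map)

lemma no_inner_holes_automorphism:
  assumes "grid_automorphism f" "no_inner_holes W"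
  shows "no_inner_holes (f ` W)"
  unfolding no_inner_holes_def
proof
  fix H' assume "H' \<in> holes (f ` W)"
  then obtain x' where x': "x' \<notin> f ` W" "H' = {y. connected_in (- (f ` W)) x' y}"
    unfolding holes_def by blast
  have inj: "inj f" and f_inv: "\<And>z. f (inv f z) = z"
    and adj: "\<And>x y. tri_adj (f x) (f y) \<longleftrightarrow> tri_adj x y"
    using assms(1) by (auto simp: grid_automorphism_def bij_is_inj bij_is_surj surj_f_inv_f)
  have compl: "- (f ` W) = f ` (- W)" using assms(1) by (simp add: grid_automorphism_def bij_image_Compl_eq)
  let ?H = "{y. connected_in (- W) (inv f x') y}"
  have "inv f x' \<notin> W" using x'(1) f_inv by (metis imageI)
  then have "?H \<in> holes W" unfolding holes_def by blast
  then have "infinite ?H" using assms(2) by (simp add: no_inner_holes_def)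
  then have "infinite (f ` ?H)" using inj by (simp add: finite_image_iff inj_on_subset)
  moreover have "f ` ?H \<subseteq> H'"
  proof
    fix z assume "z \<in> f ` ?H"
    then obtain y ps where z: "z = f y" and ps: "path_between (- W) (inv f x') y ps"
      by (auto simp: connected_in_def)
    then have "is_path_in (- (f ` W)) (map f ps)" "ps \<noteq> []"
      using is_path_in_map[OF inj adj, of "- W" ps] by (auto simp: path_between_def compl is_path_in_iff)
    then have "path_between (- (f ` W)) x' z (map f ps)"
      using ps z f_inv by (simp add: path_between_def hd_map last_map)
    then show "z \<in> H'" using x'(2) by (auto simp: connected_in_def)
  qed
  ultimately show "infinite H'" using finite_subset by blast
qed

section \<open>The potential and the distance formula\<close>

definition cut_flow :: "nat \<times> (int \<times> int \<times> int \<times> int \<times> int) \<Rightarrow> node \<Rightarrow> node \<Rightarrow> int" where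
  "cut_flow k x y = ladder_flow (snd k) ((rot ^^ fst k) x) ((rot ^^ fst k) y)"

definition cuts :: "node set \<Rightarrow> (nat \<times> (int \<times> int \<times> int \<times> int \<times> int)) set" where
  "cuts V = (SIGMA d:{..<3}. {l. is_ladder ((rot ^^ d) ` V) l})"

lemma grid_automorphism_rot_funpow: "grid_automorphism (rot ^^ d)"
  by (rule grid_automorphism_funpow[OF grid_automorphism_rot])

lemma cut_flow_antisym: "cut_flow k y x = - cut_flow k x y"
  by (simp add: cut_flow_def ladder_flow_antisym[of _ "(rot ^^ fst k) x"])

lemma finite_cuts: "finite V \<Longrightarrow> finite (cuts V)"
  unfolding cuts_def by (intro finite_SigmaI finite_ladders) auto

lemma cut_flow_closed_walk:
  assumes "no_inner_holes V" "closed_walk g" "set g \<subseteq> V" "k \<in> cuts V"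
  shows "walk_sum (cut_flow k) g = 0"
proof -
  obtain d l where k: "k = (d, l)" by (cases k)
  note aut = grid_automorphism_rot_funpow[of d]
  have "walk_sum (cut_flow k) g = walk_sum (ladder_flow l) (map (rot ^^ d) g)"
    by (simp add: k walk_sum_map cut_flow_def[abs_def])
  also have "\<dots> = 0"
  proof (rule ladder_flow_closed_walk)
    show "no_inner_holes ((rot ^^ d) ` V)" by (rule no_inner_holes_automorphism[OF aut assms(1)])
    show "closed_walk (map (rot ^^ d) g)" by (rule closed_walk_automorphism[OF aut assms(2)])
    show "set (map (rot ^^ d) g) \<subseteq> (rot ^^ d) ` V" using assms(3) by auto
    show "is_ladder ((rot ^^ d) ` V) l" using assms(4) by (simp add: k cuts_def)
  qed
  finally show ?thesis .
qed

lemma geodesic_crosses_cut_at_most_once: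
  assumes "no_inner_holes V" "geodesic V ps" "k \<in> cuts V"
  shows "walk_sum (\<lambda>x y. \<bar>cut_flow k x y\<bar>) ps \<le> 1"
proof -
  obtain d l where k: "k = (d, l)" by (cases k)
  note aut = grid_automorphism_rot_funpow[of d]
  have "walk_sum (\<lambda>x y. \<bar>cut_flow k x y\<bar>) ps =
      walk_sum (\<lambda>x y. \<bar>ladder_flow l x y\<bar>) (map (rot ^^ d) ps)"
    by (simp add: k walk_sum_map cut_flow_def[abs_def])
  also have "\<dots> \<le> 1"
  proof (rule geodesic_crosses_ladder_at_most_once)
    show "no_inner_holes ((rot ^^ d) ` V)" by (rule no_inner_holes_automorphism[OF aut assms(1)])
    show "geodesic ((rot ^^ d) ` V) (map (rot ^^ d) ps)"
      using aut assms(2) by (intro geodesic_map) (auto simp: grid_automorphism_def)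
    show "is_ladder ((rot ^^ d) ` V) l" using assms(3) by (simp add: k cuts_def)
  qed
  finally show ?thesis .
qed

text \<open>Each of the three edge directions is horizontal in exactly one of the three frames.\<close>

lemma rotations_changing_row:
  assumes "tri_adj x y"
  shows "(\<Sum>d<3. if snd ((rot ^^ d) x) = snd ((rot ^^ d) y) then 0 else 1 :: int) = 2"
proof -
  have sum3: "(\<Sum>d<3. f d) = f 0 + f 1 + (f 2 :: int)" for f :: "nat \<Rightarrow> int"
    by (simp add: numeral_3_eq_3 numeral_2_eq_2)
  obtain a b where x: "x = (a, b)" by (cases x)
  show ?thesis
    using assms unfolding x sum3
    by (elim tri_adj_cases) (simp_all add: rot_def numeral_2_eq_2)
qed

lemma cut_flow_sum_edge:
  assumes "finite V" "x \<in> V" "y \<in> V" "tri_adj x y"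
  shows "(\<Sum>k\<in>cuts V. \<bar>cut_flow k x y\<bar>) = 2"
proof -
  have "(\<Sum>k\<in>cuts V. \<bar>cut_flow k x y\<bar>) =
      (\<Sum>d<3. \<Sum>l | is_ladder ((rot ^^ d) ` V) l. \<bar>ladder_flow l ((rot ^^ d) x) ((rot ^^ d) y)\<bar>)"
    unfolding cuts_def cut_flow_def using assms(1)
    by (subst sum.Sigma) (auto intro: finite_ladders simp: split_beta)
  also have "\<dots> = (\<Sum>d<3. if snd ((rot ^^ d) x) = snd ((rot ^^ d) y) then 0 else 1)"
    using assms grid_automorphism_tri_adj[OF grid_automorphism_rot_funpow]
    by (intro sum.cong refl ladder_flow_sum_edge) auto
  also have "\<dots> = 2" by (rule rotations_changing_row[OF assms(4)])
  finally show ?thesis .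
qed

lemma walk_sum_cut_flows:
  assumes "finite V" "is_path_in V ps"
  shows "(\<Sum>k\<in>cuts V. walk_sum (\<lambda>x y. \<bar>cut_flow k x y\<bar>) ps) = 2 * int (path_len ps)"
proof -
  have "(\<Sum>k\<in>cuts V. walk_sum (\<lambda>x y. \<bar>cut_flow k x y\<bar>) ps) =
      walk_sum (\<lambda>x y. \<Sum>k\<in>cuts V. \<bar>cut_flow k x y\<bar>) ps"
    by (rule walk_sum_sum[symmetric])
  also have "\<dots> = walk_sum (\<lambda>x y. 2) ps"
  proof (rule walk_sum_cong[of tri_adj])
    show "successively tri_adj ps" using assms(2) by (simp add: is_path_in_iff)
    fix x y assume "x \<in> set ps" "y \<in> set ps" "tri_adj x y"
    moreover have "set ps \<subseteq> V" using assms(2) by (simp add: is_path_in_iff)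
    ultimately show "(\<Sum>k\<in>cuts V. \<bar>cut_flow k x y\<bar>) = 2" using cut_flow_sum_edge[OF assms(1)] by blast
  qed
  also have "\<dots> = 2 * int (path_len ps)"
    using assms(2) by (cases ps) (simp_all add: walk_sum_const is_path_in_iff path_len_def)
  finally show ?thesis .
qed

text \<open>By \<open>cut_flow_closed_walk\<close> the value does not depend on the path chosen by SOME;
  see \<open>walk_sum_cut_flow_eq_potential_diff\<close>.\<close>

definition potential :: "node set \<Rightarrow> node \<Rightarrow> nat \<times> (int \<times> int \<times> int \<times> int \<times> int) \<Rightarrow> node \<Rightarrow> int" where
  "potential V u k x = walk_sum (cut_flow k) (SOME ps. path_between V u x ps)"

lemma walk_sum_cut_flow_eq_potential_diff:
  assumes "no_inner_holes V" "\<forall>x\<in>V. \<forall>y\<in>V. connected_in V x y" "u \<in> V"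
    and "is_path_in V ps" "k \<in> cuts V"
  shows "walk_sum (cut_flow k) ps = potential V u k (last ps) - potential V u k (hd ps)"
proof -
  have ends: "hd ps \<in> V" "last ps \<in> V" using assms(4) by (auto simp: is_path_in_iff)
  define px where "px = (SOME ps'. path_between V u (hd ps) ps')"
  define py where "py = (SOME ps'. path_between V u (last ps) ps')"
  have px: "path_between V u (hd ps) px" and py: "path_between V u (last ps) py"
    unfolding px_def py_def using assms(2,3) ends by (auto simp: connected_in_def intro: someI_ex)
  have rev_py: "path_between V (last ps) u (rev py)"
    using py is_path_in_rev by (auto simp: path_between_def is_path_in_iff hd_rev last_rev)
  have "path_between V (hd ps) (last ps) ps" using assms(4) by (simp add: path_between_def)
  then have A: "path_between V u (last ps) (px @ tl ps)" using path_between_join(1)[OF px] by blast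
  then have C: "path_between V u u ((px @ tl ps) @ tl (rev py))"
    using path_between_join(1)[OF _ rev_py] by blast
  then have "walk_sum (cut_flow k) ((px @ tl ps) @ tl (rev py)) = 0"
    using cut_flow_closed_walk[OF assms(1) _ _ assms(5)]
    by (auto simp: closed_walk_def path_between_def is_path_in_iff)
  moreover have "walk_sum (cut_flow k) ((px @ tl ps) @ tl (rev py)) =
      walk_sum (cut_flow k) (px @ tl ps) + walk_sum (cut_flow k) (rev py)"
    using A rev_py by (intro walk_sum_join) (auto simp: path_between_def is_path_in_iff)
  moreover have "walk_sum (cut_flow k) (px @ tl ps) = walk_sum (cut_flow k) px + walk_sum (cut_flow k) ps"
    using px assms(4) by (intro walk_sum_join) (auto simp: path_between_def is_path_in_iff)
  moreover have "walk_sum (cut_flow k) (rev py) = - walk_sum (cut_flow k) py"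
    by (rule walk_sum_rev) (rule cut_flow_antisym)
  ultimately show ?thesis by (simp add: potential_def px_def py_def)
qed

lemma dist_in_eq_sum_potential_diff:
  assumes "simple_tri_grid_graph V" "u \<in> V" "x \<in> V" "y \<in> V"
  shows "2 * int (dist_in V x y) = (\<Sum>k\<in>cuts V. \<bar>potential V u k y - potential V u k x\<bar>)"
proof -
  have V: "finite V" "no_inner_holes V" "\<forall>x\<in>V. \<forall>y\<in>V. connected_in V x y"
    using assms(1) by (simp_all add: simple_tri_grid_graph_def tri_grid_graph_def no_inner_holes_def)
  obtain ps where ps: "shortest_path V x y ps"
    using V(3) assms(3,4) by (meson shortest_path_exists)
  then have path: "is_path_in V ps" "hd ps = x" "last ps = y"
    by (simp_all add: shortest_path_def path_between_def)
  have "\<bar>potential V u k y - potential V u k x\<bar> = walk_sum (\<lambda>a b. \<bar>cut_flow k a b\<bar>) ps"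
    if "k \<in> cuts V" for k
  proof -
    have "\<bar>potential V u k y - potential V u k x\<bar> = \<bar>walk_sum (cut_flow k) ps\<bar>"
      using walk_sum_cut_flow_eq_potential_diff[OF V(2,3) assms(2) path(1) that] path by simp
    also have "\<dots> = walk_sum (\<lambda>a b. \<bar>cut_flow k a b\<bar>) ps"
      using geodesic_crosses_cut_at_most_once[OF V(2) shortest_path_geodesic[OF ps] that]
      by (rule abs_walk_sum_eq)
    finally show ?thesis .
  qed
  then have "(\<Sum>k\<in>cuts V. \<bar>potential V u k y - potential V u k x\<bar>) =
      (\<Sum>k\<in>cuts V. walk_sum (\<lambda>a b. \<bar>cut_flow k a b\<bar>) ps)"
    by (rule sum.cong[OF refl])
  also have "\<dots> = 2 * int (path_len ps)" by (rule walk_sum_cut_flows[OF V(1) path(1)])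
  finally show ?thesis using ps by (simp add: shortest_path_def)
qed

lemma scaled_l1_embedding_potential:
  assumes "simple_tri_grid_graph V" "u \<in> V"
  shows "scaled_l1_embedding V 2 (cuts V) (potential V u)"
proof -
  have "finite V" using assms(1) by (simp add: simple_tri_grid_graph_def tri_grid_graph_def)
  then show ?thesis
    unfolding scaled_l1_embedding_def using dist_in_eq_sum_potential_diff[OF assms] finite_cuts
    by simp
qed

theorem mainTheorem1:
  fixes V :: "node set" and u v :: node
  assumes "simple_tri_grid_graph V"
    and "u \<in> V" and "v \<in> V"
  shows "geodesically_convex V (U_set V u v)"
proof -
  have "\<forall>x\<in>V. \<forall>y\<in>V. connected_in V x y"
    using assms(1) by (simp add: simple_tri_grid_graph_def tri_grid_graph_def)
  then have "U_set V u v = geodesic_interval V u v"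
    using assms(2,3) by (rule U_set_eq_geodesic_interval)
  moreover have "geodesically_convex V (geodesic_interval V u v)"
    using scaled_l1_embedding_potential[OF assms(1,2)] assms(2,3)
    by (rule geodesically_convex_geodesic_interval)
  ultimately show ?thesis by simp
qed

end
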